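(* Let $G$ be a compact Lie group with Lie algebra $\mathfrak{g}$ and bi-invariant metric $\langle\cdot,\cdot\rangle_0$, $K\subseteq G$ a closed subgroup with Lie algebra $\mathfrak{k}$, $\mathfrak{p}=\mathfrak{k}^\perp$, $t>0$, $\phi(X)=X_{\mathfrak{p}}+\frac{t}{t+1}X_{\mathfrak{k}}$, and $\langle\cdot,\cdot\rangle_1$ the left-invariant metric with $\langle X,Y\rangle_1=\langle\phi(X),Y\rangle_0$. Let $U\subseteq K\times K$ be a closed subgroup acting freely on $G$ by $(u_1,u_2)\cdot g=u_1gu_2^{-1}$, and let $\Delta G\times U$ act on $G\times G$, equipped with the product metric $\langle\cdot,\cdot\rangle_1+\langle\cdot,\cdot\rangle_1$, by $(g,(u_1,u_2))\cdot(g_1,g_2)=(gg_1u_1^{-1},gg_2u_2^{-1})$. Let $g_1\in G$ and $X,Y\in\mathfrak{g}$, and suppose that the plane $\mathrm{span}\{(\phi^{-1}(-\mathrm{Ad}_{g_1^{-1}}X),\phi^{-1}(X)),(\phi^{-1}(-\mathrm{Ad}_{g_1^{-1}}Y),\phi^{-1}(Y))\}$, viewed (by left translation) in the tangent space at $(g_1,e)$, is horizontal for this action and has zero sectional curvature with respect to $\langle\cdot,\cdot\rangle_1+\langle\cdot,\cdot\rangle_1$. Then both two-planes $\mathrm{span}\{\phi^{-1}(\mathrm{Ad}_{g_1^{-1}}X),\phi^{-1}(\mathrm{Ad}_{g_1^{-1}}Y)\}$ and $\mathrm{span}\{\phi^{-1}(X),\phi^{-1}(Y)\}$ have zero curvature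 with respect to $\langle\cdot,\cdot\rangle_1$.
   Context: Subscripts $\mathfrak{k},\mathfrak{p}$ denote components in $\mathfrak{g}=\mathfrak{k}\oplus\mathfrak{p}$. Zero curvature of a plane spanned by $a,b$ means $\langle R(a,b)b,a\rangle=0$ for the relevant curvature tensor. *)

theory Defs
  imports "HOL-Analysis.Analysis"
begin

text \<open>Lie algebra level model. A Lie bracket on a finite-dimensional real inner
product space; the inner product plays the role of the bi-invariant metric.\<close>

definition is_lie_bracket :: "('v::real_vector \<Rightarrow> 'v \<Rightarrow> 'v) \<Rightarrow> bool" where
  "is_lie_bracket br \<longleftrightarrow> bilinear br \<and> (\<forall>x y. br x y = - br y x) \<and>
     (\<forall>x y z. br x (br y z) + br y (br z x) + br z (br x y) = 0)"

definition ad_invariant :: "('v::real_inner \<Rightarrow> 'v \<Rightarrow> 'v) \<Rightarrow> bool" where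
  "ad_invariant br \<longleftrightarrow> (\<forall>x y z. inner (br x y) z = - inner y (br x z))"

definition lie_subalgebra :: "('v::real_vector \<Rightarrow> 'v \<Rightarrow> 'v) \<Rightarrow> 'v set \<Rightarrow> bool" where
  "lie_subalgebra br s \<longleftrightarrow> subspace s \<and> (\<forall>x\<in>s. \<forall>y\<in>s. br x y \<in> s)"

definition kproj :: "'a::euclidean_space set \<Rightarrow> 'a \<Rightarrow> 'a" where
  "kproj k x = (THE y. y \<in> k \<and> (\<forall>z\<in>k. inner (x - y) z = 0))"

definition cheeger_phi :: "real \<Rightarrow> 'a::euclidean_space set \<Rightarrow> 'a \<Rightarrow> 'a" where
  "cheeger_phi t k X = (X - kproj k X) + (t / (t + 1)) *\<^sub>R kproj k X"

definition metric1 :: "real \<Rightarrow> 'a::euclidean_space set \<Rightarrow> 'a \<Rightarrow> 'a \<Rightarrow> real" where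
  "metric1 t k X Y = inner (cheeger_phi t k X) Y"

text \<open>Levi-Civita connection of a left-invariant metric m on left-invariant fields
(Koszul formula) and its curvature tensor R(X,Y)Z.\<close>
definition lc_conn :: "('v::real_vector \<Rightarrow> 'v \<Rightarrow> real) \<Rightarrow> ('v \<Rightarrow> 'v \<Rightarrow> 'v) \<Rightarrow> 'v \<Rightarrow> 'v \<Rightarrow> 'v" where
  "lc_conn m br X Y = (THE w. \<forall>Z. 2 * m w Z = m (br X Y) Z - m (br Y Z) X + m (br Z X) Y)"

definition curv :: "('v::real_vector \<Rightarrow> 'v \<Rightarrow> real) \<Rightarrow> ('v \<Rightarrow> 'v \<Rightarrow> 'v) \<Rightarrow> 'v \<Rightarrow> 'v \<Rightarrow> 'v \<Rightarrow> 'v" where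
  "curv m br X Y Z = lc_conn m br X (lc_conn m br Y Z) - lc_conn m br Y (lc_conn m br X Z)
      - lc_conn m br (br X Y) Z"

definition zero_curv :: "('v::real_vector \<Rightarrow> 'v \<Rightarrow> real) \<Rightarrow> ('v \<Rightarrow> 'v \<Rightarrow> 'v) \<Rightarrow> 'v \<Rightarrow> 'v \<Rightarrow> bool" where
  "zero_curv m br a b \<longleftrightarrow> m (curv m br a b b) a = 0"

definition prod_br :: "('a \<Rightarrow> 'a \<Rightarrow> 'a) \<Rightarrow> 'a \<times> 'a \<Rightarrow> 'a \<times> 'a \<Rightarrow> 'a \<times> 'a" where
  "prod_br br p q = (br (fst p) (fst q), br (snd p) (snd q))"

definition prod_metric :: "('a \<Rightarrow> 'a \<Rightarrow> real) \<Rightarrow> 'a \<times> 'a \<Rightarrow> 'a \<times> 'a \<Rightarrow> real" where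
  "prod_metric m p q = m (fst p) (fst q) + m (snd p) (snd q)"

text \<open>Vertical space at (g1,e) of the Delta G x U action, left-translated to g x g:
 vectors (Ad_{g1^-1} Z - W1, Z - W2), Z in g, (W1,W2) in Lie(U); here A = Ad_{g1^-1}.\<close>
definition vertical_space :: "('a::real_vector \<Rightarrow> 'a) \<Rightarrow> ('a \<times> 'a) set \<Rightarrow> ('a \<times> 'a) set" where
  "vertical_space A u = {(A Z - fst w, Z - snd w) | Z w. w \<in> u}"

end

theory Submission
  imports Defs
begin

(*
  With mu = 1/(t+1) we have phi = id - mu P_k, and the Levi-Civita connection of
  <.,.>_1 on left-invariant fields is
    nabla_X Y = 1/2 ([X,Y] + mu ([X_k,Y] - [X,Y_k])).
  Expanding <R(X,Y)Y,X>_1 = - <nabla_Y Y, nabla_X X>_1 + <nabla_X Y, nabla_Y X>_1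
  - <nabla_[X,Y] Y, X>_1 gives Cheeger's formula, a sum of squares with coefficients
  (1-mu)/4, mu^3 and 1/4.  The sectional curvature of the product metric is the sum of
  those of its factors, so both nonnegative summands for the flat plane vanish; the first is
  the plane of -phi^-1(Ad X), -phi^-1(Ad Y), and the curvature is even in both vectors.
*)

section \<open>Orthogonal projection and the Cheeger map\<close>

lemma kproj_eqI:
  assumes k: "subspace k" and y: "y \<in> k" "x - y \<in> k\<^sup>\<bottom>"
  shows "kproj k x = y"
  unfolding kproj_def
proof (rule the_equality)
  show "y \<in> k \<and> (\<forall>z\<in>k. inner (x - y) z = 0)"
    using y by (auto simp: orthogonal_comp_def orthogonal_def inner_commute)
next
  fix y' assume y': "y' \<in> k \<and> (\<forall>z\<in>k. inner (x - y') z = 0)"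
  then have "x - y' \<in> k\<^sup>\<bottom>"
    by (auto simp: orthogonal_comp_def orthogonal_def inner_commute)
  then have "(x - y') - (x - y) \<in> k\<^sup>\<bottom>"
    using y(2) by (rule subspace_diff[OF subspace_orthogonal_comp])
  moreover have "(x - y') - (x - y) \<in> k"
    using k y y' by (simp add: subspace_diff)
  ultimately have "(x - y') - (x - y) = 0"
    using orthogonal_Int_0[OF k] by blast
  then show "y' = y" by simp
qed

lemma kproj_in_orthogonal_comp:
  assumes k: "subspace k"
  shows "kproj k x \<in> k" "x - kproj k x \<in> k\<^sup>\<bottom>"
proof -
  obtain y z where "y \<in> k" "z \<in> k\<^sup>\<bottom>" "x = y + z"
    using subspace_sum_orthogonal_comp[OF k] set_plus_elim by blast
  moreover from this have "kproj k x = y"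
    by (intro kproj_eqI k) simp_all
  ultimately show "kproj k x \<in> k" "x - kproj k x \<in> k\<^sup>\<bottom>" by simp_all
qed

lemma kproj_add_orthogonal_comp:
  assumes "subspace k" "a \<in> k" "x \<in> k\<^sup>\<bottom>"
  shows "kproj k (a + x) = a"
  using assms by (intro kproj_eqI) simp_all

lemma linear_kproj:
  assumes k: "subspace k"
  shows "linear (kproj k)"
proof (rule linearI)
  note proj = kproj_in_orthogonal_comp[OF k]
  have perp: "subspace (k\<^sup>\<bottom>)" by (rule subspace_orthogonal_comp)
  fix x y :: 'a and c :: real
  have "(x - kproj k x) + (y - kproj k y) \<in> k\<^sup>\<bottom>"
    using proj by (simp add: subspace_add[OF perp])
  then show "kproj k (x + y) = kproj k x + kproj k y"
    using proj by (intro kproj_eqI k) (simp_all add: subspace_add[OF k] algebra_simps)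
  have "c *\<^sub>R (x - kproj k x) \<in> k\<^sup>\<bottom>"
    using proj by (simp add: subspace_scale[OF perp])
  then show "kproj k (c *\<^sub>R x) = c *\<^sub>R kproj k x"
    using proj by (intro kproj_eqI k) (simp_all add: subspace_scale[OF k] scaleR_diff_right)
qed

lemma inner_kproj_left:
  assumes "subspace k" "a \<in> k"
  shows "inner (kproj k u) a = inner u a"
proof -
  have "inner a (u - kproj k u) = 0"
    using kproj_in_orthogonal_comp(2)[OF assms(1)] assms(2)
    by (simp add: orthogonal_comp_def orthogonal_def)
  then show ?thesis
    by (simp add: inner_diff_right inner_commute)
qed

lemma cheeger_phi_eq:
  assumes "t \<noteq> -1"
  shows "cheeger_phi t k v = v - (1 / (t + 1)) *\<^sub>R kproj k v"
proof -
  have "cheeger_phi t k v = v - (1 - t / (t + 1)) *\<^sub>R kproj k v"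
    by (simp add: cheeger_phi_def scaleR_diff_left)
  moreover have "1 - t / (t + 1) = 1 / (t + 1)"
    using assms by (simp add: field_simps)
  ultimately show ?thesis by simp
qed

lemma linear_cheeger_phi:
  assumes "subspace k"
  shows "linear (cheeger_phi t k)"
  using linear_kproj[OF assms]
  by (intro linearI) (simp_all add: cheeger_phi_def linear_add linear_scale algebra_simps)

lemma metric1_eq_inner:
  assumes "subspace k" "t \<noteq> -1"
  shows "metric1 t k u v = inner u v - 1 / (t + 1) * inner (kproj k u) (kproj k v)"
proof -
  have "v - kproj k v \<in> k\<^sup>\<bottom>" "kproj k u \<in> k"
    using kproj_in_orthogonal_comp[OF assms(1)] by simp_all
  then have "inner (kproj k u) (v - kproj k v) = 0"
    by (simp add: orthogonal_comp_def orthogonal_def)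
  then show ?thesis
    unfolding metric1_def cheeger_phi_eq[OF assms(2)]
    by (simp add: inner_diff_left inner_diff_right)
qed

lemma bij_cheeger_phi:
  assumes k: "subspace k" and t: "t \<noteq> 0" "t \<noteq> -1"
  shows "bij (cheeger_phi t k)"
proof -
  let ?\<phi> = "cheeger_phi t k" and ?\<mu> = "1 / (t + 1)"
  have lin: "linear ?\<phi>" by (rule linear_cheeger_phi[OF k])
  have "v = 0" if "?\<phi> v = 0" for v
  proof -
    have v: "v = ?\<mu> *\<^sub>R kproj k v"
      using that unfolding cheeger_phi_eq[OF t(2)] by simp
    then have "v \<in> k"
      using kproj_in_orthogonal_comp(1)[OF k] by (metis subspace_scale[OF k])
    then have "kproj k v = v"
      using kproj_add_orthogonal_comp[OF k, of v 0]
      by (simp add: subspace_0 subspace_orthogonal_comp)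
    then have "(1 - ?\<mu>) *\<^sub>R v = 0"
      using v by (simp add: algebra_simps)
    moreover have "1 - ?\<mu> \<noteq> 0"
      using t by (simp add: field_simps)
    ultimately show "v = 0" by (metis scaleR_eq_0_iff)
  qed
  then have "inj ?\<phi>"
    using linear_inj_iff_eq_0[OF lin] by blast
  then show ?thesis
    using linear_injective_imp_surjective[OF lin] by (simp add: bij_def)
qed

lemma inv_cheeger_phi_uminus:
  assumes "subspace k" "t \<noteq> 0" "t \<noteq> -1"
  shows "inv (cheeger_phi t k) (- v) = - inv (cheeger_phi t k) v"
  using assms
  by (intro linear_neg inj_linear_imp_inv_linear linear_cheeger_phi bij_is_inj bij_cheeger_phi)

lemma metric1_eqI:
  assumes "subspace k" "t \<noteq> 0" "t \<noteq> -1" and eq: "\<And>Z. metric1 t k u Z = metric1 t k v Z"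
  shows "u = v"
proof -
  have "inner (cheeger_phi t k u - cheeger_phi t k v) Z = 0" for Z
    using eq[of Z] by (simp add: metric1_def inner_diff_left)
  then have "cheeger_phi t k u = cheeger_phi t k v"
    by (metis inner_eq_zero_iff right_minus_eq)
  then show "u = v"
    using bij_is_inj[OF bij_cheeger_phi[OF assms(1-3)]] by (simp add: inj_eq)
qed

section \<open>Levi-Civita connections via the Koszul formula\<close>

lemma lc_conn_eqI:
  fixes m :: "'v::real_vector \<Rightarrow> 'v \<Rightarrow> real"
  assumes cancel: "\<And>u v. (\<And>Z. m u Z = m v Z) \<Longrightarrow> u = v"
    and koszul: "\<And>Z. 2 * m w Z = m (br X Y) Z - m (br Y Z) X + m (br Z X) Y"
  shows "lc_conn m br X Y = w"
  unfolding lc_conn_def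
proof (rule the_equality)
  fix w' assume "\<forall>Z. 2 * m w' Z = m (br X Y) Z - m (br Y Z) X + m (br Z X) Y"
  then show "w' = w"
    using koszul by (intro cancel) (metis mult_cancel_left zero_neq_numeral)
qed (use koszul in blast)

lemma koszul_metric_compatible:
  fixes m :: "'v::real_vector \<Rightarrow> 'v \<Rightarrow> real"
  assumes koszul: "\<And>X Y Z. 2 * m (D X Y) Z = m (br X Y) Z - m (br Y Z) X + m (br Z X) Y"
    and sym: "\<And>u v. m u v = m v u"
    and skew: "\<And>X Y Z. m (br Y X) Z = - m (br X Y) Z"
  shows "m (D X Y) Z = - m Y (D X Z)"
  using koszul[of X Y Z] koszul[of X Z Y] sym[of Y "D X Z"]
    skew[of Y X Z] skew[of Z X Y] skew[of Z Y X]
  by linarith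

lemma lc_conn_prod:
  fixes m :: "'v::real_vector \<Rightarrow> 'v \<Rightarrow> real"
  assumes cancel: "\<And>u v. (\<And>Z. m u Z = m v Z) \<Longrightarrow> u = v"
    and zero: "\<And>u. m u 0 = 0"
    and koszul: "\<And>X Y Z. 2 * m (D X Y) Z = m (br X Y) Z - m (br Y Z) X + m (br Z X) Y"
  shows "lc_conn (prod_metric m) (prod_br br) p q = (D (fst p) (fst q), D (snd p) (snd q))"
proof (rule lc_conn_eqI)
  fix u v :: "'v \<times> 'v"
  assume eq: "\<And>Z. prod_metric m u Z = prod_metric m v Z"
  have "m (fst u) Z = m (fst v) Z" "m (snd u) Z = m (snd v) Z" for Z
    using eq[of "(Z, 0)"] eq[of "(0, Z)"] by (simp_all add: prod_metric_def zero)
  then show "u = v"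
    using cancel by (simp add: prod_eq_iff)
next
  fix Z :: "'v \<times> 'v"
  show "2 * prod_metric m (D (fst p) (fst q), D (snd p) (snd q)) Z =
      prod_metric m (prod_br br p q) Z - prod_metric m (prod_br br q Z) p
        + prod_metric m (prod_br br Z p) q"
    using koszul[of "fst p" "fst q" "fst Z"] koszul[of "snd p" "snd q" "snd Z"]
    by (simp add: prod_metric_def prod_br_def)
qed

lemma sectional_curvature_prod:
  fixes m :: "'v::real_vector \<Rightarrow> 'v \<Rightarrow> real"
  assumes cancel: "\<And>u v. (\<And>Z. m u Z = m v Z) \<Longrightarrow> u = v"
    and zero: "\<And>u. m u 0 = 0"
    and koszul: "\<And>X Y Z. 2 * m (D X Y) Z = m (br X Y) Z - m (br Y Z) X + m (br Z X) Y"
  shows "prod_metric m (curv (prod_metric m) (prod_br br) p q q) p =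
    m (curv m br (fst p) (fst q) (fst q)) (fst p) + m (curv m br (snd p) (snd q) (snd q)) (snd p)"
proof -
  have "lc_conn m br X Y = D X Y" for X Y
    using cancel koszul by (rule lc_conn_eqI)
  moreover have "lc_conn (prod_metric m) (prod_br br) p' q'
      = (D (fst p') (fst q'), D (snd p') (snd q'))" for p' q'
    using cancel zero koszul by (rule lc_conn_prod)
  ultimately show ?thesis
    by (simp add: curv_def prod_br_def prod_metric_def)
qed

section \<open>Curvature of the Cheeger deformation\<close>

(* Applied with c = [X_k,Y_k], g1 = [X_k,Y_p], g2 = [X_p,Y_k] and e, f the k- and
   p-components of [X_p,Y_p]. *)
lemma cheeger_curvature_sum_of_squares:
  fixes c e g1 g2 f :: "'a::real_inner" and \<mu> :: real
  assumes "inner c g1 = 0" "inner c g2 = 0" "inner c f = 0"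
    and "inner e g1 = 0" "inner e g2 = 0" "inner e f = 0"
  shows "1/4 * (norm (c + e + g1 + g2 + f))\<^sup>2 + 3 * \<mu> / 4 * (norm (c + e))\<^sup>2
      - \<mu> / 2 * inner (c + e + g1 + g2 + f) (2 *\<^sub>R c + g1 + g2)
      + \<mu>\<^sup>2 / 4 * (norm (g1 - g2))\<^sup>2 - \<mu>\<^sup>2 * (inner c e - inner g1 g2)
    = (1 - \<mu>) / 4 * (norm (c + (1 + 2 * \<mu>) *\<^sub>R e))\<^sup>2 + \<mu> ^ 3 * (norm e)\<^sup>2
      + 1/4 * (norm ((1 - \<mu>) *\<^sub>R (g1 + g2) + f))\<^sup>2"
proof -
  have orth: "inner g1 c = 0" "inner g2 c = 0" "inner f c = 0"
    "inner g1 e = 0" "inner g2 e = 0" "inner f e = 0"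
    using assms by (simp_all add: inner_commute)
  have comm: "inner e c = inner c e" "inner g2 g1 = inner g1 g2"
    "inner f g1 = inner g1 f" "inner f g2 = inner g2 f"
    by (simp_all add: inner_commute)
  show ?thesis
    unfolding power2_norm_eq_inner
    by (simp only: inner_add_left inner_add_right inner_diff_left inner_diff_right
        inner_scaleR_left inner_scaleR_right assms orth comm)
      (simp add: field_simps power2_eq_square power3_eq_cube)
qed

locale cheeger_deformation =
  fixes br :: "'a::euclidean_space \<Rightarrow> 'a \<Rightarrow> 'a" and k :: "'a set" and t :: real
  assumes lie: "is_lie_bracket br"
    and ad_inv: "ad_invariant br"
    and subalg: "lie_subalgebra br k"
    and t_pos: "t > 0"
begin

abbreviation "m \<equiv> metric1 t k"
abbreviation "kpart \<equiv> kproj k"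
abbreviation "ppart X \<equiv> X - kproj k X"

definition \<mu> :: real where "\<mu> = 1 / (t + 1)"

lemma t_ne: "t \<noteq> 0" "t \<noteq> -1"
  using t_pos by simp_all

lemma mu_pos: "0 < \<mu>" and mu_less_1: "\<mu> < 1"
  using t_pos by (simp_all add: \<mu>_def)

lemma bilinear_br: "bilinear br"
  using lie unfolding is_lie_bracket_def by blast

lemma br_anticomm: "br x y = - br y x"
  using lie unfolding is_lie_bracket_def by blast

lemma br_jacobi: "br x (br y z) + br y (br z x) + br z (br x y) = 0"
  using lie unfolding is_lie_bracket_def by blast

lemma inner_br_left: "inner (br x y) z = - inner y (br x z)"
  using ad_inv unfolding ad_invariant_def by blast

lemma subspace_k: "subspace k"
  using subalg by (simp add: lie_subalgebra_def)

lemma br_in_k: "a \<in> k \<Longrightarrow> b \<in> k \<Longrightarrow> br a b \<in> k"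
  using subalg by (simp add: lie_subalgebra_def)

lemmas br_simps = bilinear_ladd[OF bilinear_br] bilinear_radd[OF bilinear_br]
  bilinear_lmul[OF bilinear_br] bilinear_rmul[OF bilinear_br]
  bilinear_lneg[OF bilinear_br] bilinear_rneg[OF bilinear_br]
  bilinear_lsub[OF bilinear_br] bilinear_rsub[OF bilinear_br]
  bilinear_lzero[OF bilinear_br] bilinear_rzero[OF bilinear_br]

lemma br_self: "br x x = 0"
proof -
  have "br x x + br x x = 0"
    using br_anticomm[of x x] by (metis add.right_inverse)
  then show ?thesis
    by (simp flip: scaleR_2)
qed

lemma inner_br_swap: "inner (br x y) z = inner x (br y z)"
  using inner_br_left[of y x z] br_anticomm[of x y] by simp

lemma inner_br_br: "inner (br a x) (br b y) = inner (br a b) (br x y) - inner (br a y) (br x b)"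
proof -
  have jacobi: "br x (br b y) = br b (br x y) - br y (br x b)"
  proof -
    have "br b (br y x) = - br b (br x y)"
      using br_anticomm[of y x] by (simp add: br_simps)
    then show ?thesis
      using br_jacobi[of x b y] by (simp add: algebra_simps)
  qed
  have "inner (br a x) (br b y) = inner a (br x (br b y))"
    by (rule inner_br_swap)
  also have "\<dots> = inner a (br b (br x y)) - inner a (br y (br x b))"
    unfolding jacobi by (rule inner_diff_right)
  also have "\<dots> = inner (br a b) (br x y) - inner (br a y) (br x b)"
    by (simp only: inner_br_swap)
  finally show ?thesis .
qed

lemma br_orthogonal_comp:
  assumes "a \<in> k" "x \<in> k\<^sup>\<bottom>"
  shows "br a x \<in> k\<^sup>\<bottom>"
proof -
  have "inner z (br a x) = 0" if "z \<in> k" for z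
  proof -
    have "inner z (br a x) = - inner (br a z) x"
      using inner_br_left[of a z x] by (simp add: inner_commute)
    also have "inner (br a z) x = 0"
      using assms br_in_k[OF assms(1) that] by (simp add: orthogonal_comp_def orthogonal_def)
    finally show ?thesis by simp
  qed
  then show ?thesis
    by (simp add: orthogonal_comp_def orthogonal_def)
qed

lemma kpart_in: "kpart X \<in> k" and ppart_in: "ppart X \<in> k\<^sup>\<bottom>"
  using kproj_in_orthogonal_comp[OF subspace_k] by simp_all

lemma kpart_orthogonal_comp: "x \<in> k\<^sup>\<bottom> \<Longrightarrow> kpart x = 0"
  using kproj_add_orthogonal_comp[OF subspace_k subspace_0[OF subspace_k]] by simp

lemma linear_kpart: "linear kpart"
  by (rule linear_kproj[OF subspace_k])

lemma metric1_eq_mu: "m u v = inner u v - \<mu> * inner (kpart u) (kpart v)"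
  using metric1_eq_inner[OF subspace_k t_ne(2)] by (simp add: \<mu>_def)

lemma metric1_sym: "m u v = m v u"
  by (simp add: metric1_eq_mu inner_commute)

lemma metric1_diff_left: "m (u - v) w = m u w - m v w"
  by (simp add: metric1_eq_mu linear_diff[OF linear_kpart] inner_diff_left algebra_simps)

definition nabla :: "'a \<Rightarrow> 'a \<Rightarrow> 'a" where
  "nabla X Y = (1/2) *\<^sub>R (br X Y + \<mu> *\<^sub>R (br (kpart X) Y - br X (kpart Y)))"

lemma nabla_correction_eq:
  "br (kpart X) Y - br X (kpart Y) = br (kpart X) (ppart Y) + br (kpart Y) (ppart X)"
proof -
  have "br (kpart X) Y - br X (kpart Y)
      = br (kpart X) (kpart Y + ppart Y) - br (kpart X + ppart X) (kpart Y)"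
    by simp
  also have "\<dots> = br (kpart X) (ppart Y) - br (ppart X) (kpart Y)"
    unfolding bilinear_radd[OF bilinear_br] bilinear_ladd[OF bilinear_br] by simp
  finally show ?thesis
    using br_anticomm[of "ppart X" "kpart Y"] by simp
qed

lemma nabla_correction_orthogonal_comp: "br (kpart X) Y - br X (kpart Y) \<in> k\<^sup>\<bottom>"
proof -
  have "br (kpart X) (ppart Y) \<in> k\<^sup>\<bottom>" "br (kpart Y) (ppart X) \<in> k\<^sup>\<bottom>"
    by (intro br_orthogonal_comp kpart_in ppart_in)+
  then show ?thesis
    unfolding nabla_correction_eq by (rule subspace_add[OF subspace_orthogonal_comp])
qed

lemma koszul_nabla: "2 * m (nabla X Y) Z = m (br X Y) Z - m (br Y Z) X + m (br Z X) Y"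
proof -
  define V where "V = br (kpart X) Y - br X (kpart Y)"
  have "kpart V = 0"
    unfolding V_def by (rule kpart_orthogonal_comp[OF nabla_correction_orthogonal_comp])
  then have lhs: "2 * m (nabla X Y) Z = m (br X Y) Z + \<mu> * inner V Z"
    by (simp add: nabla_def metric1_eq_mu linear_add[OF linear_kpart] linear_scale[OF linear_kpart]
        V_def[symmetric] inner_add_left algebra_simps)
  have cyclic: "inner (br Y Z) X = inner (br Z X) Y"
    unfolding inner_br_swap[of Y Z X] by (rule inner_commute)
  have "inner V Z = inner (br Y Z) (kpart X) - inner (br Z X) (kpart Y)"
    using inner_br_swap[of "kpart X" Y Z] inner_br_swap[of Z X "kpart Y"]
    by (simp add: V_def inner_diff_left inner_diff_right inner_commute)
  also have "\<dots> = inner (kpart (br Y Z)) (kpart X) - inner (kpart (br Z X)) (kpart Y)"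
    using inner_kproj_left[OF subspace_k kpart_in] by simp
  finally have "\<mu> * inner V Z
      = \<mu> * inner (kpart (br Y Z)) (kpart X) - \<mu> * inner (kpart (br Z X)) (kpart Y)"
    by (simp add: right_diff_distrib)
  with cyclic show ?thesis
    unfolding lhs by (simp add: metric1_eq_mu algebra_simps)
qed

lemma lc_conn_metric1: "lc_conn m br X Y = nabla X Y"
  using metric1_eqI[OF subspace_k t_ne] koszul_nabla by (rule lc_conn_eqI)

lemma metric1_nabla_skew: "m (nabla X Y) Z = - m Y (nabla X Z)"
proof (rule koszul_metric_compatible[where br = br])
  show "2 * m (nabla X Y) Z = m (br X Y) Z - m (br Y Z) X + m (br Z X) Y" for X Y Z
    by (rule koszul_nabla)
  show "m u v = m v u" for u v
    by (rule metric1_sym)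
  show "m (br Y X) Z = - m (br X Y) Z" for X Y Z
    using metric1_diff_left[of 0 "br X Y" Z] br_anticomm[of Y X]
    by (simp add: metric1_eq_mu linear_0[OF linear_kpart])
qed

lemma sectional_metric1_nabla:
  "m (curv m br X Y Y) X
    = - m (nabla Y Y) (nabla X X) + m (nabla X Y) (nabla Y X) - m (nabla (br X Y) Y) X"
  using metric1_nabla_skew[of X "nabla Y Y" X] metric1_nabla_skew[of Y "nabla X Y" X]
  by (simp add: curv_def lc_conn_metric1 metric1_diff_left metric1_sym[of "nabla X Y"])

lemma nabla_self: "nabla Y Y = \<mu> *\<^sub>R br (kpart Y) (ppart Y)"
proof -
  have "br (kpart Y) Y - br Y (kpart Y) = 2 *\<^sub>R br (kpart Y) (ppart Y)"
    using nabla_correction_eq[of Y Y] by (simp add: scaleR_2)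
  then show ?thesis
    by (simp add: nabla_def br_self)
qed

lemma nabla_swap: "nabla Y X = (1/2) *\<^sub>R (- br X Y + \<mu> *\<^sub>R (br (kpart X) Y - br X (kpart Y)))"
  using br_anticomm[of Y X] br_anticomm[of "kpart Y" X] br_anticomm[of Y "kpart X"]
  by (simp add: nabla_def algebra_simps)

lemma metric1_nabla_self:
  "m (nabla Y Y) (nabla X X) = \<mu>\<^sup>2 * inner (br (kpart Y) (ppart Y)) (br (kpart X) (ppart X))"
proof -
  have "kpart (br (kpart X) (ppart X)) = 0"
    by (intro kpart_orthogonal_comp br_orthogonal_comp kpart_in ppart_in)
  then show ?thesis
    by (simp add: nabla_self metric1_eq_mu linear_scale[OF linear_kpart] power2_eq_square)
qed

lemma metric1_nabla_nabla_swap: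
  "m (nabla X Y) (nabla Y X)
    = - 1/4 * (norm (br X Y))\<^sup>2 + \<mu> / 4 * (norm (kpart (br X Y)))\<^sup>2
      + \<mu>\<^sup>2 / 4 * (norm (br (kpart X) Y - br X (kpart Y)))\<^sup>2"
proof -
  define Z where "Z = br X Y"
  define V where "V = br (kpart X) Y - br X (kpart Y)"
  have kV: "kpart V = 0"
    unfolding V_def by (rule kpart_orthogonal_comp[OF nabla_correction_orthogonal_comp])
  have XY: "nabla X Y = (1/2) *\<^sub>R (Z + \<mu> *\<^sub>R V)"
    unfolding Z_def V_def by (rule nabla_def)
  have YX: "nabla Y X = (1/2) *\<^sub>R (- Z + \<mu> *\<^sub>R V)"
    unfolding Z_def V_def by (rule nabla_swap)
  have "kpart (nabla X Y) = (1/2) *\<^sub>R kpart Z" "kpart (nabla Y X) = - (1/2) *\<^sub>R kpart Z"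
    unfolding XY YX using kV
    by (simp_all add: linear_add[OF linear_kpart] linear_diff[OF linear_kpart]
        linear_scale[OF linear_kpart])
  moreover have "inner (nabla X Y) (nabla Y X) = 1/4 * (\<mu>\<^sup>2 * inner V V - inner Z Z)"
    unfolding XY YX using inner_commute[of Z V]
    by (simp add: inner_add_left inner_add_right power2_eq_square algebra_simps)
  ultimately show ?thesis
    unfolding metric1_eq_mu Z_def[symmetric] V_def[symmetric] power2_norm_eq_inner
    by (simp add: algebra_simps)
qed

lemma metric1_nabla_bracket:
  "2 * m (nabla (br X Y) Y) X
    = - (norm (br X Y))\<^sup>2 + \<mu> * inner (br X Y) (br (kpart X) Y + br X (kpart Y))
      - \<mu> * (norm (kpart (br X Y)))\<^sup>2"
proof -
  define Z where "Z = br X Y"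
  have "inner (br Z Y) X = - (norm Z)\<^sup>2" "inner (br Y X) Z = - (norm Z)\<^sup>2"
    "inner (br X Z) Y = - (norm Z)\<^sup>2"
    unfolding Z_def power2_norm_eq_inner
    using inner_br_swap[of "br X Y" Y X] inner_br_left[of X "br X Y" Y] br_anticomm[of Y X]
    by (simp_all add: inner_commute)
  moreover have "inner (kpart (br Z Y)) (kpart X) = - inner Z (br (kpart X) Y)"
    using inner_kproj_left[OF subspace_k kpart_in] inner_br_swap[of Z Y "kpart X"]
      br_anticomm[of Y "kpart X"] by simp
  moreover have "inner (kpart (br X Z)) (kpart Y) = - inner Z (br X (kpart Y))"
    using inner_kproj_left[OF subspace_k kpart_in] inner_br_left[of X Z "kpart Y"] by simp
  moreover have "inner (kpart (br Y X)) (kpart Z) = - (norm (kpart Z))\<^sup>2"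
    using br_anticomm[of Y X] unfolding Z_def
    by (simp add: linear_neg[OF linear_kpart] power2_norm_eq_inner)
  ultimately show ?thesis
    using koszul_nabla[of Z Y X] unfolding Z_def[symmetric]
    by (simp add: metric1_eq_mu inner_add_right algebra_simps)
qed

lemma sectional_metric1_bracket:
  "m (curv m br X Y Y) X
    = 1/4 * (norm (br X Y))\<^sup>2 + 3 * \<mu> / 4 * (norm (kpart (br X Y)))\<^sup>2
      - \<mu> / 2 * inner (br X Y) (br (kpart X) Y + br X (kpart Y))
      + \<mu>\<^sup>2 / 4 * (norm (br (kpart X) Y - br X (kpart Y)))\<^sup>2
      - \<mu>\<^sup>2 * inner (br (kpart Y) (ppart Y)) (br (kpart X) (ppart X))"
  using sectional_metric1_nabla[of X Y] metric1_nabla_self[of Y X] metric1_nabla_nabla_swap[of X Y]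
    metric1_nabla_bracket[of X Y]
  by (simp add: field_simps)

lemma sectional_metric1:
  "m (curv m br X Y Y) X
    = (1 - \<mu>) / 4
        * (norm (br (kpart X) (kpart Y) + (1 + 2 * \<mu>) *\<^sub>R kpart (br (ppart X) (ppart Y))))\<^sup>2
      + \<mu> ^ 3 * (norm (kpart (br (ppart X) (ppart Y))))\<^sup>2
      + 1/4 * (norm ((1 - \<mu>) *\<^sub>R (br (kpart X) (ppart Y) + br (ppart X) (kpart Y))
                     + ppart (br (ppart X) (ppart Y))))\<^sup>2"
proof -
  define c g1 g2 e f where "c = br (kpart X) (kpart Y)" "g1 = br (kpart X) (ppart Y)"
    "g2 = br (ppart X) (kpart Y)"
    "e = kpart (br (ppart X) (ppart Y))" "f = ppart (br (ppart X) (ppart Y))"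
  have k: "c \<in> k" "e \<in> k"
    unfolding c_g1_g2_e_f_def by (simp_all add: br_in_k kpart_in)
  have p: "g1 \<in> k\<^sup>\<bottom>" "g2 \<in> k\<^sup>\<bottom>" "f \<in> k\<^sup>\<bottom>"
    using br_orthogonal_comp[OF kpart_in[of X] ppart_in[of Y]]
      br_orthogonal_comp[OF kpart_in[of Y] ppart_in[of X]] br_anticomm[of "ppart X" "kpart Y"] ppart_in
    unfolding c_g1_g2_e_f_def by (simp_all add: subspace_neg[OF subspace_orthogonal_comp])
  have orth: "inner c g1 = 0" "inner c g2 = 0" "inner c f = 0"
    "inner e g1 = 0" "inner e g2 = 0" "inner e f = 0"
    using k p by (simp_all add: orthogonal_comp_def orthogonal_def)
  have Z: "br X Y = c + e + g1 + g2 + f"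
  proof -
    have "br X Y = br (kpart X + ppart X) (kpart Y + ppart Y)"
      by simp
    then show ?thesis
      unfolding c_g1_g2_e_f_def by (simp only: br_simps) (simp add: algebra_simps)
  qed
  have PZ: "kpart (br X Y) = c + e"
  proof -
    have "c + e \<in> k" "g1 + g2 + f \<in> k\<^sup>\<bottom>"
      using k p
      by (simp_all add: subspace_add[OF subspace_k] subspace_add[OF subspace_orthogonal_comp])
    then have "kpart ((c + e) + (g1 + g2 + f)) = c + e"
      by (rule kproj_add_orthogonal_comp[OF subspace_k])
    then show ?thesis
      unfolding Z by (simp only: add.assoc)
  qed
  have S: "br (kpart X) Y + br X (kpart Y) = 2 *\<^sub>R c + g1 + g2"
  proof -
    have "br (kpart X) Y + br X (kpart Y)
        = br (kpart X) (kpart Y + ppart Y) + br (kpart X + ppart X) (kpart Y)"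
      by simp
    then show ?thesis
      unfolding c_g1_g2_e_f_def by (simp only: br_simps) (simp add: scaleR_2 algebra_simps)
  qed
  have D: "br (kpart X) Y - br X (kpart Y) = g1 - g2"
    using nabla_correction_eq[of X Y] br_anticomm[of "kpart Y" "ppart X"]
    unfolding c_g1_g2_e_f_def by simp
  have J: "inner (br (kpart Y) (ppart Y)) (br (kpart X) (ppart X)) = inner c e - inner g1 g2"
  proof -
    have "inner c (br (ppart X) (ppart Y)) = inner c e"
      using orth(3) unfolding c_g1_g2_e_f_def by (simp add: inner_diff_right)
    then show ?thesis
      using inner_br_br[of "kpart X" "ppart X" "kpart Y" "ppart Y"]
      unfolding c_g1_g2_e_f_def by (simp add: inner_commute)
  qed
  show ?thesis
    unfolding sectional_metric1_bracket PZ unfolding Z S D J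
    using cheeger_curvature_sum_of_squares[OF orth] unfolding c_g1_g2_e_f_def .
qed

lemma sectional_prod_metric1:
  "prod_metric m (curv (prod_metric m) (prod_br br) p q q) p
    = m (curv m br (fst p) (fst q) (fst q)) (fst p) + m (curv m br (snd p) (snd q) (snd q)) (snd p)"
proof (rule sectional_curvature_prod)
  show "u = v" if "\<And>Z. m u Z = m v Z" for u v
    using that by (rule metric1_eqI[OF subspace_k t_ne])
  show "m u 0 = 0" for u
    by (simp add: metric1_def)
  show "2 * m (nabla X Y) Z = m (br X Y) Z - m (br Y Z) X + m (br Z X) Y" for X Y Z
    by (rule koszul_nabla)
qed

lemma sectional_metric1_nonneg: "0 \<le> m (curv m br X Y Y) X"
  unfolding sectional_metric1 using mu_pos mu_less_1
  by (intro add_nonneg_nonneg mult_nonneg_nonneg) simp_all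

lemma sectional_metric1_uminus: "m (curv m br (- X) (- Y) (- Y)) (- X) = m (curv m br X Y Y) X"
  unfolding sectional_metric1 by (simp add: linear_neg[OF linear_kpart] br_simps algebra_simps)

end

theorem corollary2p3:
  fixes br :: "'a::euclidean_space \<Rightarrow> 'a \<Rightarrow> 'a"
    and k :: "'a set"
    and u :: "('a \<times> 'a) set"
    and A :: "'a \<Rightarrow> 'a"
    and t :: real
    and X Y :: 'a
  assumes lie: "is_lie_bracket br"
    and biinv: "ad_invariant br"
    and ksub: "lie_subalgebra br k"
    and tpos: "t > 0"
    and usub: "lie_subalgebra (prod_br br) u"
    and uk: "u \<subseteq> k \<times> k"
    and Alin: "linear A"
    and Abij: "bij A"
    and Abr: "\<And>x y. A (br x y) = br (A x) (A y)"
    and Aisom: "\<And>x y. inner (A x) (A y) = inner x y"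
    and horiz: "\<And>\<xi> \<eta>. \<xi> \<in> span {(inv (cheeger_phi t k) (- A X), inv (cheeger_phi t k) X),
                                 (inv (cheeger_phi t k) (- A Y), inv (cheeger_phi t k) Y)}
                 \<Longrightarrow> \<eta> \<in> vertical_space A u \<Longrightarrow> prod_metric (metric1 t k) \<xi> \<eta> = 0"
    and flat: "zero_curv (prod_metric (metric1 t k)) (prod_br br)
                 (inv (cheeger_phi t k) (- A X), inv (cheeger_phi t k) X)
                 (inv (cheeger_phi t k) (- A Y), inv (cheeger_phi t k) Y)"
  shows "zero_curv (metric1 t k) br (inv (cheeger_phi t k) (A X)) (inv (cheeger_phi t k) (A Y))
       \<and> zero_curv (metric1 t k) br (inv (cheeger_phi t k) X) (inv (cheeger_phi t k) Y)"
proof -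
  interpret cheeger_deformation br k t
    using lie biinv ksub tpos by unfold_locales
  let ?\<psi> = "inv (cheeger_phi t k)"
  let ?sec = "\<lambda>V W. m (curv m br V W W) V"
  have "?sec (?\<psi> (- A X)) (?\<psi> (- A Y)) + ?sec (?\<psi> X) (?\<psi> Y) = 0"
    using flat by (simp add: zero_curv_def sectional_prod_metric1)
  moreover have "?sec (?\<psi> (- A X)) (?\<psi> (- A Y)) = ?sec (?\<psi> (A X)) (?\<psi> (A Y))"
    using inv_cheeger_phi_uminus[OF subspace_k t_ne] by (simp add: sectional_metric1_uminus)
  ultimately show ?thesis
    using sectional_metric1_nonneg[of "?\<psi> (A X)" "?\<psi> (A Y)"]
      sectional_metric1_nonneg[of "?\<psi> X" "?\<psi> Y"]
    by (simp add: zero_curv_def)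
qed

end
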